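(* Fix an integer $L\ge1$ and $\alpha>0$, and let $N_{RF}\ge1$ be any number of RF chains. For the IT-SU interleaved training scheme with $N_t$ beams, $L$ channel paths, $N_{RF}$ RF chains and threshold $\alpha$ described in the context, the average training length satisfies, as $N_t\to\infty$, $$T_{\text{IT-SU}}=\frac{N_t}{L+1}+\mathcal O(1),$$ where $\mathcal O(1)$ denotes a quantity bounded as $N_t\to\infty$ (with $L,\alpha$ fixed).
   Context: Channel model: for integers $N_t\ge L$, a random subset $\mathcal I\subset\{1,\dots,N_t\}$ with $|\mathcal I|=L$ is drawn uniformly among all $L$-element subsets; conditionally on $\mathcal I$, the coefficients $\bar h_i$, $i\in\mathcal I$, are i.i.d. circularly symmetric complex Gaussian $\mathcal{CN}(0,1/L)$, and $\bar h_i=0$ for $i\notin\mathcal I$. IT-SU scheme (with $N_{RF}\ge1$ RF chains and threshold $\alpha>0$): for $i=1,2,\dots,N_t$ in order, beam $i$ is trained, i.e. $\bar h_i$ becomes known. After step $i$, let $\mathcal B_i=\{l\le i:\bar h_l\neq 0\}$, $L_{B_i}=\min(N_{RF},|\mathcal B_i|)$, and let $\mathcal S_i\subset\mathcal B_i$ be the indices of the $L_{B_i}$ elements of $\mathcal B_i$ with largest $|\bar h_l|$. The training terminates at step $i$ if $\bar h_i\ne 0$ and $\sum_{l\in\mathcal S_i}|\bar h_l|^2>\alpha/N_t$; otherwise it proceeds to step $i+1$. The training length $T$ is the step at which the training terminates, and $T=N_t$ if it never terminates. The average training length is $T_{\text{IT-SU}}=\mathrm E[T]$. *)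

theory Defs
  imports "HOL-Probability.Probability" "HOL-Library.Landau_Symbols"
begin

definition cgauss :: "real \<Rightarrow> complex measure" where
  "cgauss s2 = density lborel (\<lambda>z. ennreal (exp (- (cmod z)\<^sup>2 / s2) / (pi * s2)))"

definition top_sum :: "nat \<Rightarrow> (nat \<Rightarrow> real) \<Rightarrow> nat set \<Rightarrow> real" where
  "top_sum k f B = Max {sum f S | S. S \<subseteq> B \<and> card S = k}"

definition beams_nz :: "(nat \<Rightarrow> complex) \<Rightarrow> nat \<Rightarrow> nat set" where
  "beams_nz h i = {l \<in> {1..i}. h l \<noteq> 0}"

definition itsu_stop :: "nat \<Rightarrow> real \<Rightarrow> nat \<Rightarrow> (nat \<Rightarrow> complex) \<Rightarrow> nat \<Rightarrow> bool" where
  "itsu_stop NRF \<alpha> Nt h i \<longleftrightarrow>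
     i \<in> {1..Nt} \<and> h i \<noteq> 0 \<and>
     top_sum (min NRF (card (beams_nz h i))) (\<lambda>l. (cmod (h l))\<^sup>2) (beams_nz h i) > \<alpha> / real Nt"

definition itsu_length :: "nat \<Rightarrow> real \<Rightarrow> nat \<Rightarrow> (nat \<Rightarrow> complex) \<Rightarrow> nat" where
  "itsu_length NRF \<alpha> Nt h =
     (if \<exists>i. itsu_stop NRF \<alpha> Nt h i then (LEAST i. itsu_stop NRF \<alpha> Nt h i) else Nt)"

text \<open>Channel model: a uniformly random L-subset I of {1..Nt} and, independently,
  i.i.d. CN(0,1/L) values g_i for all i in {1..Nt}; the channel is
  h_i = g_i for i in I and 0 otherwise (same law as in the paper).\<close>
definition channel_space :: "nat \<Rightarrow> nat \<Rightarrow> (nat set \<times> (nat \<Rightarrow> complex)) measure" where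
  "channel_space L Nt =
     measure_pmf (pmf_of_set {I. I \<subseteq> {1..Nt} \<and> card I = L})
       \<Otimes>\<^sub>M PiM {1..Nt} (\<lambda>_. cgauss (1 / real L))"

definition channel_of :: "nat set \<times> (nat \<Rightarrow> complex) \<Rightarrow> nat \<Rightarrow> complex" where
  "channel_of \<omega> i = (if i \<in> fst \<omega> then snd \<omega> i else 0)"

definition avg_itsu_length :: "nat \<Rightarrow> nat \<Rightarrow> real \<Rightarrow> nat \<Rightarrow> real" where
  "avg_itsu_length L NRF \<alpha> Nt =
     (\<integral>\<omega>. real (itsu_length NRF \<alpha> Nt (channel_of \<omega>)) \<partial>channel_space L Nt)"

end

theory Submission
  imports Defs
begin

text \<open>Training cannot stop before the first nonzero coefficient, which sits at index Min I, and it
  stops there as soon as |h_{Min I}|^2 > \<alpha>/N_t. Under CN(0,1/L) the opposite event has probability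
  at most \<alpha>L/N_t, and it costs at most N_t steps, so E[T | I] lies between Min I and Min I + \<alpha>L.
  Averaging Min I over the uniformly random L-subset I of {1..N_t} gives (N_t+1)/(L+1), by the
  hockey-stick identity.\<close>

subsection \<open>The stopping rule\<close>

lemma top_sum_singleton [simp]: "top_sum (Suc 0) f {m} = f m"
proof -
  have "{sum f S |S. S \<subseteq> {m} \<and> card S = Suc 0} = {f m}"
    by (auto simp: subset_singleton_iff intro: exI[of _ "{m}"])
  then show ?thesis unfolding top_sum_def by simp
qed

text \<open>A finite case split over the possible values of B_i; this is what makes the stopping
  event measurable.\<close>

lemma itsu_stop_iff_Pow:
  "itsu_stop NRF \<alpha> Nt h i \<longleftrightarrow> i \<in> {1..Nt} \<and> h i \<noteq> 0 \<and>
    (\<exists>B\<in>Pow {1..i}. (\<forall>l\<in>{1..i}. h l \<noteq> 0 \<longleftrightarrow> l \<in> B) \<and>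
       \<alpha> / real Nt < top_sum (min NRF (card B)) (\<lambda>l. (cmod (h l))\<^sup>2) B)"
proof -
  have "beams_nz h i \<in> Pow {1..i}" unfolding beams_nz_def by auto
  moreover have "beams_nz h i = B \<longleftrightarrow> (\<forall>l\<in>{1..i}. h l \<noteq> 0 \<longleftrightarrow> l \<in> B)" if "B \<subseteq> {1..i}" for B
    using that unfolding beams_nz_def by auto
  ultimately show ?thesis unfolding itsu_stop_def by blast
qed

lemma channel_of_nonzero: "channel_of (I, g) i \<noteq> 0 \<Longrightarrow> i \<in> I"
  by (simp add: channel_of_def split: if_splits)

lemma itsu_length_le: "itsu_length NRF \<alpha> Nt h \<le> Nt"
proof (cases "\<exists>i. itsu_stop NRF \<alpha> Nt h i")
  case True
  then obtain i where i: "itsu_stop NRF \<alpha> Nt h i" by blast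
  then have "(LEAST i. itsu_stop NRF \<alpha> Nt h i) \<le> i" by (rule Least_le)
  also have "i \<le> Nt" using i unfolding itsu_stop_def by simp
  finally show ?thesis unfolding itsu_length_def using True by simp
qed (simp add: itsu_length_def)

lemma Min_le_itsu_length:
  assumes "I \<subseteq> {1..Nt}" and "I \<noteq> {}"
  shows "Min I \<le> itsu_length NRF \<alpha> Nt (channel_of (I, g))"
proof -
  have fin: "finite I" using assms(1) finite_subset by blast
  show ?thesis
  proof (cases "\<exists>i. itsu_stop NRF \<alpha> Nt (channel_of (I, g)) i")
    case True
    let ?k = "LEAST i. itsu_stop NRF \<alpha> Nt (channel_of (I, g)) i"
    have "itsu_stop NRF \<alpha> Nt (channel_of (I, g)) ?k" using True by (rule LeastI_ex)
    then have "?k \<in> I" unfolding itsu_stop_def by (blast intro: channel_of_nonzero)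
    then show ?thesis unfolding itsu_length_def using True fin by simp
  next
    case False
    have "Min I \<in> I" using fin assms(2) by simp
    then show ?thesis unfolding itsu_length_def using False assms(1) by auto
  qed
qed

lemma itsu_length_le_Min:
  assumes "I \<subseteq> {1..Nt}" and "I \<noteq> {}" and "NRF \<ge> 1" and "\<alpha> > 0"
    and big: "\<alpha> / real Nt < (cmod (g (Min I)))\<^sup>2"
  shows "itsu_length NRF \<alpha> Nt (channel_of (I, g)) \<le> Min I"
proof -
  let ?h = "channel_of (I, g)" and ?m = "Min I"
  have fin: "finite I" using assms(1) finite_subset by blast
  have m: "?m \<in> I" using fin assms(2) by simp
  have h_m: "?h ?m = g ?m" using m by (simp add: channel_of_def)
  have "0 \<le> \<alpha> / real Nt" using assms(4) by simp
  with big have "g ?m \<noteq> 0" by auto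
  have "l = ?m" if "l \<in> I" and "l \<le> ?m" for l using fin that by (simp add: antisym)
  then have "beams_nz ?h ?m = {?m}"
    using m assms(1) \<open>g ?m \<noteq> 0\<close> h_m
    unfolding beams_nz_def channel_of_def by (auto split: if_splits)
  then have "itsu_stop NRF \<alpha> Nt ?h ?m"
    using m assms(1,3) big h_m \<open>g ?m \<noteq> 0\<close> unfolding itsu_stop_def by auto
  then show ?thesis unfolding itsu_length_def by (auto intro: Least_le)
qed

lemma borel_measurable_top_sum:
  fixes f :: "'a \<Rightarrow> nat \<Rightarrow> real"
  assumes "finite B" and "\<And>l. l \<in> B \<Longrightarrow> (\<lambda>x. f x l) \<in> borel_measurable M"
  shows "(\<lambda>x. top_sum k (f x) B) \<in> borel_measurable M"
proof -
  let ?\<S> = "{S. S \<subseteq> B \<and> card S = k}"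
  have "{sum (f x) S |S. S \<subseteq> B \<and> card S = k} = sum (f x) ` ?\<S>" for x
    by blast
  moreover have "(\<lambda>x. Max (sum (f x) ` ?\<S>)) \<in> borel_measurable M"
    using assms by (intro borel_measurable_Max borel_measurable_sum) auto
  ultimately show ?thesis unfolding top_sum_def by simp
qed

lemma measurable_itsu_length:
  assumes "\<And>l. l \<in> {1..Nt} \<Longrightarrow> (\<lambda>x. H x l) \<in> borel_measurable M"
  shows "(\<lambda>x. itsu_length NRF \<alpha> Nt (H x)) \<in> measurable M (count_space UNIV)"
proof -
  have [measurable]: "Measurable.pred M (\<lambda>x. itsu_stop NRF \<alpha> Nt (H x) i)" for i
  proof (cases "i \<in> {1..Nt}")
    case True
    have [measurable]: "(\<lambda>x. H x l) \<in> borel_measurable M" if "l \<in> {1..i}" for l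
      using assms that True by auto
    have [measurable]: "(\<lambda>x. top_sum k (\<lambda>l. (cmod (H x l))\<^sup>2) B) \<in> borel_measurable M"
      if "B \<in> Pow {1..i}" for k B
      using that by (intro borel_measurable_top_sum) (auto intro: finite_subset)
    show ?thesis unfolding itsu_stop_iff_Pow by measurable
  next
    case False
    then have "\<not> itsu_stop NRF \<alpha> Nt (H x) i" for x unfolding itsu_stop_def by blast
    then show ?thesis by simp
  qed
  show ?thesis unfolding itsu_length_def by measurable
qed

lemma integrable_itsu_length:
  assumes "finite_measure M" and "\<And>l. l \<in> {1..Nt} \<Longrightarrow> (\<lambda>x. H x l) \<in> borel_measurable M"
  shows "integrable M (\<lambda>x. real (itsu_length NRF \<alpha> Nt (H x)))"
proof (rule finite_measure.integrable_const_bound[OF assms(1), where B = "real Nt"])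
  show "(\<lambda>x. real (itsu_length NRF \<alpha> Nt (H x))) \<in> borel_measurable M"
    using measurable_itsu_length[OF assms(2)]
    by (rule measurable_compose[OF _ borel_measurable_count_space])
qed (simp add: itsu_length_le)

subsection \<open>The channel distribution\<close>

lemma sets_cgauss [measurable_cong, simp]: "sets (cgauss s2) = sets borel"
  unfolding cgauss_def by simp

lemma cgauss_density_eq_normal_density:
  assumes "s2 > 0"
  shows "exp (- (cmod z)\<^sup>2 / s2) / (pi * s2) =
    (\<Prod>b\<in>Basis. normal_density 0 (sqrt (s2 / 2)) (z \<bullet> b))"
proof -
  have nd: "normal_density 0 (sqrt (s2 / 2)) x = exp (- x\<^sup>2 / s2) / sqrt (pi * s2)" for x
    using assms unfolding normal_density_def by (simp add: field_simps)
  have "(\<Prod>b\<in>Basis. normal_density 0 (sqrt (s2 / 2)) (z \<bullet> b)) =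
      exp (- (Re z)\<^sup>2 / s2) * exp (- (Im z)\<^sup>2 / s2) / (sqrt (pi * s2) * sqrt (pi * s2))"
    by (simp add: Basis_complex_def nd)
  also have "\<dots> = exp (- (cmod z)\<^sup>2 / s2) / (pi * s2)"
    using assms by (simp add: cmod_def exp_add[symmetric] add_divide_distrib diff_divide_distrib)
  finally show ?thesis by simp
qed

lemma prob_space_cgauss:
  assumes "s2 > 0"
  shows "prob_space (cgauss s2)"
proof
  have "(\<integral>\<^sup>+z. ennreal (exp (- (cmod z)\<^sup>2 / s2) / (pi * s2)) \<partial>lborel) =
      (\<integral>\<^sup>+z. (\<Prod>b\<in>Basis. ennreal (normal_density 0 (sqrt (s2 / 2)) ((z::complex) \<bullet> b))) \<partial>lborel)"
    by (subst cgauss_density_eq_normal_density[OF assms]) (simp add: prod_ennreal)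
  also have "\<dots> = (\<Prod>b\<in>(Basis::complex set). \<integral>\<^sup>+x. ennreal (normal_density 0 (sqrt (s2 / 2)) x) \<partial>lborel)"
    by (rule nn_integral_lborel_prod) auto
  also have "\<dots> = 1"
    using assms by (subst nn_integral_eq_integral) auto
  finally show "emeasure (cgauss s2) (space (cgauss s2)) = 1"
    unfolding cgauss_def by (simp add: emeasure_density)
qed

lemma cgauss_disc_le:
  assumes "s2 > 0" and "t \<ge> 0"
  shows "measure (cgauss s2) {z. (cmod z)\<^sup>2 \<le> t} \<le> t / s2"
proof -
  have disc: "{z. (cmod z)\<^sup>2 \<le> t} = cball 0 (sqrt t)"
  proof (intro set_eqI iffI)
    fix z :: complex
    assume "z \<in> cball 0 (sqrt t)"
    then have "(cmod z)\<^sup>2 \<le> (sqrt t)\<^sup>2" by (intro power_mono) (auto simp: dist_norm)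
    then show "z \<in> {z. (cmod z)\<^sup>2 \<le> t}" using assms(2) by simp
  qed (auto simp: dist_norm real_le_rsqrt)
  have "emeasure (cgauss s2) (cball 0 (sqrt t)) =
      (\<integral>\<^sup>+z. ennreal (exp (- (cmod z)\<^sup>2 / s2) / (pi * s2)) * indicator (cball 0 (sqrt t)) z \<partial>lborel)"
    unfolding cgauss_def by (subst emeasure_density) auto
  also have "\<dots> \<le> (\<integral>\<^sup>+z. ennreal (1 / (pi * s2)) * indicator (cball 0 (sqrt t)) (z::complex) \<partial>lborel)"
    using assms(1) by (intro nn_integral_mono mult_right_mono ennreal_leI divide_right_mono) auto
  also have "\<dots> = ennreal (1 / (pi * s2)) * ennreal (pi * t)"
    using assms(2) by (simp add: nn_integral_cmult_indicator emeasure_cball unit_ball_vol_2)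
  also have "\<dots> = ennreal (t / s2)"
    using assms by (simp add: ennreal_mult[symmetric])
  finally show ?thesis
    unfolding disc measure_def using assms by (simp add: enn2real_leI)
qed

lemma prob_space_channel_gains:
  assumes "s > 0"
  shows "prob_space (PiM {1..Nt} (\<lambda>_. cgauss s))"
  by (simp add: prob_space_PiM prob_space_cgauss[OF assms])

lemma measurable_channel_of:
  assumes "i \<in> {1..Nt}"
  shows "(\<lambda>\<omega>. channel_of \<omega> i) \<in> borel_measurable (measure_pmf p \<Otimes>\<^sub>M PiM {1..Nt} (\<lambda>_. cgauss s))"
proof -
  have [measurable]: "Measurable.pred (count_space UNIV) (\<lambda>I. i \<in> I)" by simp
  show ?thesis using assms unfolding channel_of_def by measurable
qed

lemma measurable_channel_of_support:
  assumes "i \<in> {1..Nt}"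
  shows "(\<lambda>g. channel_of (I, g) i) \<in> borel_measurable (PiM {1..Nt} (\<lambda>_. cgauss s))"
  using assms by (cases "i \<in> I") (simp_all add: channel_of_def, measurable)

subsection \<open>The minimum of a random subset\<close>

lemma Min_eq_card_lower_bounds:
  assumes "I \<subseteq> {1..N}" and "I \<noteq> {}"
  shows "Min I = card {k\<in>{1..N}. I \<subseteq> {k..N}}"
proof -
  have fin: "finite I" using assms(1) finite_subset by blast
  have "Min I \<in> I" using fin assms(2) by simp
  then have "Min I \<le> N" using assms(1) by auto
  moreover have "I \<subseteq> {k..N} \<longleftrightarrow> k \<le> Min I" for k
    using fin assms by (auto simp: subset_iff)
  ultimately have "{k\<in>{1..N}. I \<subseteq> {k..N}} = {1..Min I}" by auto
  then show ?thesis by simp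
qed

lemma sum_Min_subsets:
  assumes "L \<ge> 1"
  shows "(\<Sum>I | I \<subseteq> {1..N} \<and> card I = L. Min I) = Suc N choose Suc L"
proof -
  let ?S = "{I. I \<subseteq> {1..N} \<and> card I = L}"
  have "(\<Sum>I\<in>?S. Min I) = (\<Sum>I\<in>?S. card {k\<in>{1..N}. I \<subseteq> {k..N}})"
    using assms by (intro sum.cong refl Min_eq_card_lower_bounds) auto
  also have "\<dots> = (\<Sum>k\<in>{1..N}. card {I\<in>?S. I \<subseteq> {k..N}})"
    using sum.swap_restrict[of ?S "{1..N}" "\<lambda>_ _. 1::nat"] by simp
  also have "\<dots> = (\<Sum>k\<in>{1..N}. (Suc N - k) choose L)"
  proof (rule sum.cong[OF refl])
    fix k assume "k \<in> {1..N}"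
    then have "{I\<in>?S. I \<subseteq> {k..N}} = {I. I \<subseteq> {k..N} \<and> card I = L}" by auto
    then show "card {I\<in>?S. I \<subseteq> {k..N}} = (Suc N - k) choose L"
      by (simp add: n_subsets)
  qed
  also have "\<dots> = (\<Sum>i\<in>{1..N}. i choose L)"
    by (rule sum.reindex_bij_witness[where i = "\<lambda>i. Suc N - i" and j = "\<lambda>i. Suc N - i"]) auto
  also have "\<dots> = (\<Sum>i\<le>N. i choose L)"
    using assms by (simp add: atMost_atLeast0 sum.atLeast_Suc_atMost)
  also have "\<dots> = Suc N choose Suc L"
    by (rule sum_choose_upper)
  finally show ?thesis .
qed

lemma card_subsets_atLeastAtMost: "card {I. I \<subseteq> {1..N} \<and> card I = L} = N choose L"
  by (simp add: n_subsets)

lemma mean_Min_subsets: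
  assumes "L \<ge> 1" and "L \<le> N"
  shows "(\<Sum>I | I \<subseteq> {1..N} \<and> card I = L. real (Min I)) / real (N choose L) = (real N + 1) / (real L + 1)"
proof -
  have "(Suc N choose Suc L) * Suc L = Suc N * (N choose L)"
    by (rule Suc_times_binomial_eq[symmetric])
  then have "real (Suc N choose Suc L) * (real L + 1) = (real N + 1) * real (N choose L)"
    by (metis of_nat_Suc of_nat_mult add.commute)
  moreover have "real (N choose L) > 0" using assms(2) by simp
  ultimately show ?thesis
    using sum_Min_subsets[OF assms(1), of N] by (simp add: field_simps flip: of_nat_sum)
qed

subsection \<open>The average training length\<close>

lemma (in prob_space) integral_le_off_event:
  assumes "integrable M f" and "A \<in> events"
    and "\<And>x. x \<in> space M \<Longrightarrow> f x \<le> b + c"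
    and "\<And>x. x \<in> space M \<Longrightarrow> x \<notin> A \<Longrightarrow> f x \<le> b"
  shows "expectation f \<le> b + c * prob A"
proof -
  have "integrable M (indicator A :: _ \<Rightarrow> real)"
    using assms(2) by (simp add: less_top[symmetric])
  then have "expectation f \<le> expectation (\<lambda>x. b + c * indicator A x)"
    using assms by (intro integral_mono) (auto split: split_indicator)
  also have "\<dots> = b + c * prob A"
    using \<open>integrable M (indicator A)\<close> assms(2)
    by (subst Bochner_Integration.integral_add) (auto simp: prob_space)
  finally show ?thesis .
qed

lemma Min_le_expectation_itsu_length:
  assumes "L \<ge> 1" and "I \<subseteq> {1..Nt}" and "I \<noteq> {}"
  shows "real (Min I) \<le>
    (\<integral>g. real (itsu_length NRF \<alpha> Nt (channel_of (I, g))) \<partial>PiM {1..Nt} (\<lambda>_. cgauss (1 / real L)))"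
proof -
  interpret G: prob_space "PiM {1..Nt} (\<lambda>_. cgauss (1 / real L))"
    using assms(1) by (intro prob_space_channel_gains) simp
  show ?thesis
    by (intro G.integral_ge_const integrable_itsu_length G.finite_measure_axioms
        measurable_channel_of_support AE_I2) (auto intro: Min_le_itsu_length[OF assms(2,3)])
qed

lemma expectation_itsu_length_le:
  assumes "L \<ge> 1" and "\<alpha> > 0" and "NRF \<ge> 1" and "I \<subseteq> {1..Nt}" and "I \<noteq> {}"
  shows "(\<integral>g. real (itsu_length NRF \<alpha> Nt (channel_of (I, g))) \<partial>PiM {1..Nt} (\<lambda>_. cgauss (1 / real L)))
    \<le> real (Min I) + \<alpha> * real L"
proof -
  let ?G = "PiM {1..Nt} (\<lambda>_. cgauss (1 / real L))" and ?m = "Min I" and ?t = "\<alpha> / real Nt"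
  interpret P: product_prob_space "\<lambda>_. cgauss (1 / real L)" "{1..Nt}"
    using assms(1) by (intro product_prob_spaceI prob_space_cgauss) simp
  have "?m \<in> I" using assms(4,5) finite_subset[OF assms(4)] by simp
  then have m: "?m \<in> {1..Nt}" using assms(4) by auto
  define A where "A = {g \<in> space ?G. (cmod (g ?m))\<^sup>2 \<le> ?t}"
  have A_event: "A \<in> P.events" using m unfolding A_def by measurable
  have "P.prob A = measure (cgauss (1 / real L)) {z. (cmod z)\<^sup>2 \<le> ?t}"
    using P.emeasure_PiM_Collect_single[OF m, of "{z. (cmod z)\<^sup>2 \<le> ?t}"]
    unfolding A_def measure_def by simp
  also have "\<dots> \<le> ?t / (1 / real L)"
    using assms(1,2) by (intro cgauss_disc_le) auto
  finally have "real Nt * P.prob A \<le> \<alpha> * real L"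
    using m by (simp add: field_simps)
  moreover have "P.expectation (\<lambda>g. real (itsu_length NRF \<alpha> Nt (channel_of (I, g))))
      \<le> real ?m + real Nt * P.prob A"
  proof (rule P.integral_le_off_event[OF _ A_event])
    show "integrable ?G (\<lambda>g. real (itsu_length NRF \<alpha> Nt (channel_of (I, g))))"
      by (intro integrable_itsu_length P.finite_measure_axioms measurable_channel_of_support)
    show "real (itsu_length NRF \<alpha> Nt (channel_of (I, g))) \<le> real ?m + real Nt" for g
      using itsu_length_le[of NRF \<alpha> Nt] by (simp add: add_increasing)
    show "real (itsu_length NRF \<alpha> Nt (channel_of (I, g))) \<le> real ?m"
      if "g \<in> space ?G" and "g \<notin> A" for g
      using that assms by (simp add: A_def itsu_length_le_Min)
  qed
  ultimately show ?thesis by simp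
qed

lemma avg_itsu_length_eq_mean:
  assumes "L \<ge> 1" and "L \<le> Nt"
  shows "avg_itsu_length L NRF \<alpha> Nt =
    (\<Sum>I | I \<subseteq> {1..Nt} \<and> card I = L.
       \<integral>g. real (itsu_length NRF \<alpha> Nt (channel_of (I, g))) \<partial>PiM {1..Nt} (\<lambda>_. cgauss (1 / real L)))
    / real (Nt choose L)"
proof -
  let ?S = "{I. I \<subseteq> {1..Nt} \<and> card I = L}" and ?G = "PiM {1..Nt} (\<lambda>_. cgauss (1 / real L))"
  let ?T = "\<lambda>\<omega>. real (itsu_length NRF \<alpha> Nt (channel_of \<omega>))"
  interpret G: prob_space ?G
    using assms(1) by (intro prob_space_channel_gains) simp
  interpret P: pair_prob_space "measure_pmf (pmf_of_set ?S)" ?G ..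
  have "?S \<noteq> {}"
    using obtain_subset_with_card_n[of L "{1..Nt}"] assms(2) by auto
  have "avg_itsu_length L NRF \<alpha> Nt = (\<integral>\<omega>. ?T \<omega> \<partial>(measure_pmf (pmf_of_set ?S) \<Otimes>\<^sub>M ?G))"
    unfolding avg_itsu_length_def channel_space_def ..
  also have "\<dots> = (\<integral>I. (\<integral>g. ?T (I, g) \<partial>?G) \<partial>measure_pmf (pmf_of_set ?S))"
  proof (rule P.integral_fst'[symmetric])
    show "integrable (measure_pmf (pmf_of_set ?S) \<Otimes>\<^sub>M ?G) ?T"
      by (rule integrable_itsu_length[OF P.finite_measure_axioms measurable_channel_of])
  qed
  also have "\<dots> = (\<Sum>I\<in>?S. \<integral>g. ?T (I, g) \<partial>?G) / real (card ?S)"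
    by (rule integral_pmf_of_set[OF \<open>?S \<noteq> {}\<close>]) simp
  also have "card ?S = Nt choose L" by (rule card_subsets_atLeastAtMost)
  finally show ?thesis .
qed

lemma avg_itsu_length_bounds:
  assumes "L \<ge> 1" and "\<alpha> > 0" and "NRF \<ge> 1" and "L \<le> Nt"
  shows "(real Nt + 1) / (real L + 1) \<le> avg_itsu_length L NRF \<alpha> Nt"
    and "avg_itsu_length L NRF \<alpha> Nt \<le> (real Nt + 1) / (real L + 1) + \<alpha> * real L"
proof -
  let ?S = "{I. I \<subseteq> {1..Nt} \<and> card I = L}"
  let ?E = "\<lambda>I. \<integral>g. real (itsu_length NRF \<alpha> Nt (channel_of (I, g))) \<partial>PiM {1..Nt} (\<lambda>_. cgauss (1 / real L))"
  have support: "I \<subseteq> {1..Nt}" "I \<noteq> {}" if "I \<in> ?S" for I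
    using that assms(1) by auto
  have pos: "real (Nt choose L) > 0" using assms(4) by simp
  note mean = mean_Min_subsets[OF assms(1,4)] and avg = avg_itsu_length_eq_mean[OF assms(1,4)]
  have "(\<Sum>I\<in>?S. real (Min I)) \<le> (\<Sum>I\<in>?S. ?E I)"
    using support by (intro sum_mono Min_le_expectation_itsu_length[OF assms(1)])
  then show "(real Nt + 1) / (real L + 1) \<le> avg_itsu_length L NRF \<alpha> Nt"
    unfolding avg mean[symmetric] using pos by (intro divide_right_mono) auto
  have "(\<Sum>I\<in>?S. ?E I) \<le> (\<Sum>I\<in>?S. real (Min I) + \<alpha> * real L)"
    using support by (intro sum_mono expectation_itsu_length_le[OF assms(1-3)])
  also have "\<dots> = (\<Sum>I\<in>?S. real (Min I)) + real (Nt choose L) * (\<alpha> * real L)"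
    by (simp only: sum.distrib sum_constant card_subsets_atLeastAtMost)
  finally have "(\<Sum>I\<in>?S. ?E I) / real (Nt choose L) \<le>
      ((\<Sum>I\<in>?S. real (Min I)) + real (Nt choose L) * (\<alpha> * real L)) / real (Nt choose L)"
    using pos by (intro divide_right_mono) auto
  also have "\<dots> = (\<Sum>I\<in>?S. real (Min I)) / real (Nt choose L) + \<alpha> * real L"
    using pos by (simp add: add_divide_distrib)
  finally show "avg_itsu_length L NRF \<alpha> Nt \<le> (real Nt + 1) / (real L + 1) + \<alpha> * real L"
    unfolding avg mean .
qed

theorem corollary1:
  fixes L NRF :: nat and \<alpha> :: real
  assumes "L \<ge> 1" and "\<alpha> > 0" and "NRF \<ge> 1"
  shows "(\<lambda>Nt. avg_itsu_length L NRF \<alpha> Nt - real Nt / real (L + 1)) \<in> O(\<lambda>_. 1)"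
proof (rule bigoI[where c = "1 + \<alpha> * real L"])
  show "\<forall>\<^sub>F Nt in at_top. norm (avg_itsu_length L NRF \<alpha> Nt - real Nt / real (L + 1))
      \<le> (1 + \<alpha> * real L) * norm (1::real)"
  proof (rule eventually_mono[OF eventually_ge_at_top[of L]])
    fix Nt assume "L \<le> Nt"
    note bounds = avg_itsu_length_bounds[OF assms \<open>L \<le> Nt\<close>]
    have "(real Nt + 1) / (real L + 1) = real Nt / real (L + 1) + 1 / (real L + 1)"
      by (simp add: add_divide_distrib)
    moreover have "0 \<le> 1 / (real L + 1)" and "1 / (real L + 1) \<le> 1" by simp_all
    moreover have "0 \<le> \<alpha> * real L" using assms(2) by simp
    ultimately show "norm (avg_itsu_length L NRF \<alpha> Nt - real Nt / real (L + 1))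
        \<le> (1 + \<alpha> * real L) * norm (1::real)"
      using bounds unfolding of_nat_add of_nat_1 real_norm_def abs_one mult_1_right abs_le_iff
      by linarith
  qed
qed

end
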